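(* Let $\Omega\subset\mathbb{R}^N$ be a bounded open set and let $\mathcal{A}:[0,|\Omega|]\to[0,\infty)$ be increasing with $\mathcal{A}(0)=0$, of class $C^3$ on $(0,|\Omega|]$, with $\mathcal{A}'(0^+)=\infty$ and $\lim_{s\to0^+}\frac{\mathcal{A}'(s)\mathcal{A}'''(s)}{(\mathcal{A}''(s))^2}\ge\nu$ for some $\nu>1$. Then for every $p\ge1$, $\mathcal{L}_{\mathcal{A},p}(\Omega)\subsetneq L^p(\Omega)$.
   Context: For an increasing $\mathcal{A}$ with $\mathcal{A}(0)=0$ and $p\ge1$: for measurable $u$ vanishing outside $\Omega$, with distribution function $\mu(t)=|\{x:|u(x)|>t\}|$, set $\|u\|_{\mathcal{A},p}=\big(p\int_0^\infty\mathcal{A}(\mu(t))t^{p-1}\,dt\big)^{1/p}$, and $\mathcal{L}_{\mathcal{A},p}(\Omega)=\{u$ measurable, $u=0$ outside $\Omega$, $\|u\|_{\mathcal{A},p}<\infty\}$. *)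

theory Defs
  imports "HOL-Analysis.Analysis"
begin

definition distrib_fun :: "('a::euclidean_space \<Rightarrow> real) \<Rightarrow> real \<Rightarrow> real" where
  "distrib_fun u t = measure lebesgue {x. \<bar>u x\<bar> > t}"

definition LAp_norm_pow :: "(real \<Rightarrow> real) \<Rightarrow> real \<Rightarrow> ('a::euclidean_space \<Rightarrow> real) \<Rightarrow> ennreal" where
  "LAp_norm_pow A p u =
     ennreal p * (\<integral>\<^sup>+ t. indicator {0<..} t * ennreal (A (distrib_fun u t) * t powr (p - 1)) \<partial>lborel)"

(* L_{A,p}(Omega): measurable, vanishing outside Omega, finite ||u||_{A,p}
   (finiteness of ||u||_{A,p} is equivalent to finiteness of its p-th power) *)
definition LAp :: "(real \<Rightarrow> real) \<Rightarrow> real \<Rightarrow> 'a::euclidean_space set \<Rightarrow> ('a \<Rightarrow> real) set" where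
  "LAp A p \<Omega> = {u. u \<in> borel_measurable lebesgue \<and> (\<forall>x. x \<notin> \<Omega> \<longrightarrow> u x = 0)
                     \<and> LAp_norm_pow A p u < \<infinity>}"

definition Lp_space :: "real \<Rightarrow> 'a::euclidean_space set \<Rightarrow> ('a \<Rightarrow> real) set" where
  "Lp_space p \<Omega> = {u. u \<in> borel_measurable lebesgue \<and> (\<forall>x. x \<notin> \<Omega> \<longrightarrow> u x = 0)
                     \<and> (\<integral>\<^sup>+ x. ennreal (\<bar>u x\<bar> powr p) \<partial>lebesgue) < \<infinity>}"

end

theory Submission
  imports Defs
begin

text \<open>
  Since A is increasing with A'(0+) = \<infinity>, there is c > 0 with c s \<le> A s on [0, |\<Omega>|], and the
  layer-cake formula \<integral> |u|^p = p \<integral> t^(p-1) \<mu>(t) dt then bounds the L^p norm by the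
  L_{A,p} norm.  Conversely A(s)/s \<longrightarrow> \<infinity> as s \<longrightarrow> 0, so there are nested balls E_k \<subseteq> \<Omega> with
  A(|E_k|) \<ge> 2^k |E_k|.  Put |u|^p = \<Sum>_k c_k 1_{E_k} with c_k = 1/(2^k |E_k|), so that
  \<integral> |u|^p = \<Sum>_k 2^(-k).  For t between T_k = (\<Sum>_{j<k} c_j)^(1/p) and T_{k+1} the level set
  {|u| > t} contains E_k, hence A(\<mu>(t)) \<ge> 1/c_k, and each interval (T_k, T_{k+1}) contributes
  1 to the L_{A,p} norm.  Only A'(0+) = \<infinity> is used.
\<close>

lemma nn_integral_powr_derivative:
  fixes a b p :: real
  assumes "0 \<le> a" "a \<le> b" "0 < p"
  shows "(\<integral>\<^sup>+t. indicator {a<..<b} t * ennreal (p * t powr (p - 1)) \<partial>lborel)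
    = ennreal (b powr p - a powr p)"
proof -
  have "((\<lambda>t. p * t powr (p - 1)) has_integral (b powr p - a powr p)) {a..b}"
  proof (rule fundamental_theorem_of_calculus_interior)
    show "continuous_on {a..b} (\<lambda>t. t powr p)"
      using assms by (intro continuous_on_powr' continuous_intros) auto
    show "((\<lambda>t. t powr p) has_vector_derivative p * t powr (p - 1)) (at t)" if "t \<in> {a<..<b}" for t
      using that assms
      by (auto intro!: derivative_eq_intros simp: has_real_derivative_iff_has_vector_derivative[symmetric])
  qed (use assms in auto)
  moreover have "a powr p \<le> b powr p"
    using assms by (simp add: powr_mono2)
  ultimately have "(\<integral>\<^sup>+t. indicator {a..b} t * ennreal (p * t powr (p - 1)) \<partial>lborel)
      = ennreal (b powr p - a powr p)"
    using nn_integral_has_integral_lebesgue[of "{a..b}" "\<lambda>t. p * t powr (p - 1)"] assms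
    by (simp add: indicator_mult_ennreal)
  moreover have "(\<integral>\<^sup>+t. indicator {a<..<b} t * ennreal (p * t powr (p - 1)) \<partial>lborel)
      = (\<integral>\<^sup>+t. indicator {a..b} t * ennreal (p * t powr (p - 1)) \<partial>lborel)"
    by (intro nn_integral_cong_AE eventually_mono[OF eventually_conj[OF
          AE_lborel_singleton[of a] AE_lborel_singleton[of b]]]) (auto simp: indicator_def)
  ultimately show ?thesis
    by simp
qed

lemma sigma_finite_lebesgue: "sigma_finite_measure (lebesgue :: 'a::euclidean_space measure)"
proof
  obtain A :: "'a set set" where "countable A" "A \<subseteq> sets lborel" "\<Union>A = space lborel"
    "\<forall>a\<in>A. emeasure lborel a \<noteq> \<infinity>"
    using lborel.sigma_finite_countable by metis
  then show "\<exists>A::'a set set. countable A \<and> A \<subseteq> sets lebesgue \<and> \<Union>A = space lebesgue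
      \<and> (\<forall>a\<in>A. emeasure lebesgue a \<noteq> \<infinity>)"
    by (intro exI[of _ A]) auto
qed

lemma sets_lebesgue_abs_superlevel[measurable]:
  fixes u :: "'a::euclidean_space \<Rightarrow> real"
  assumes [measurable]: "u \<in> borel_measurable lebesgue"
  shows "{x. t < \<bar>u x\<bar>} \<in> sets lebesgue"
proof -
  have "{x\<in>space lebesgue. t < \<bar>u x\<bar>} \<in> sets lebesgue"
    by measurable
  then show ?thesis
    by simp
qed

lemma nn_integral_powr_layer_cake:
  fixes u :: "'a::euclidean_space \<Rightarrow> real"
  assumes [measurable]: "u \<in> borel_measurable lebesgue" and p: "0 < p"
  shows "(\<integral>\<^sup>+x. ennreal (\<bar>u x\<bar> powr p) \<partial>lebesgue)
    = (\<integral>\<^sup>+t. indicator {0<..} t * ennreal (p * t powr (p - 1))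
          * emeasure lebesgue {x. t < \<bar>u x\<bar>} \<partial>lborel)"
proof -
  interpret L: sigma_finite_measure "lebesgue :: 'a measure"
    by (rule sigma_finite_lebesgue)
  interpret P: pair_sigma_finite "lebesgue :: 'a measure" lborel ..
  define g where "g x t = indicator {0<..} t * ennreal (p * t powr (p - 1)) * indicator {x. t < \<bar>u x\<bar>} x"
    for x t
  have [measurable]: "(\<lambda>(x, t). g x t) \<in> borel_measurable (lebesgue \<Otimes>\<^sub>M lborel)"
    unfolding g_def by measurable
  have "ennreal (\<bar>u x\<bar> powr p) = (\<integral>\<^sup>+t. g x t \<partial>lborel)" for x
    unfolding nn_integral_powr_derivative[of 0 "\<bar>u x\<bar>" p, simplified, OF p, symmetric] g_def
    using p by (intro nn_integral_cong) (auto simp: indicator_def)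
  then have "(\<integral>\<^sup>+x. ennreal (\<bar>u x\<bar> powr p) \<partial>lebesgue)
      = (\<integral>\<^sup>+x. (\<integral>\<^sup>+t. g x t \<partial>lborel) \<partial>lebesgue)"
    by simp
  also have "\<dots> = (\<integral>\<^sup>+t. (\<integral>\<^sup>+x. g x t \<partial>lebesgue) \<partial>lborel)"
    by (rule P.Fubini'[symmetric]) measurable
  also have "\<dots> = (\<integral>\<^sup>+t. indicator {0<..} t * ennreal (p * t powr (p - 1))
          * emeasure lebesgue {x. t < \<bar>u x\<bar>} \<partial>lborel)"
    unfolding g_def by (intro nn_integral_cong nn_integral_cmult_indicator) measurable
  finally show ?thesis .
qed

lemma distrib_fun_nonneg[simp]: "0 \<le> distrib_fun u t"
  by (simp add: distrib_fun_def)

context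
  fixes u :: "'a::euclidean_space \<Rightarrow> real" and \<Omega> :: "'a set"
  assumes u_measurable[measurable]: "u \<in> borel_measurable lebesgue"
    and u_vanishes: "\<And>x. x \<notin> \<Omega> \<Longrightarrow> u x = 0"
    and \<Omega>_fmeasurable: "\<Omega> \<in> fmeasurable lebesgue"
begin

lemma abs_superlevel_subset: "0 \<le> t \<Longrightarrow> {x. t < \<bar>u x\<bar>} \<subseteq> \<Omega>"
  using u_vanishes by force

lemma abs_superlevel_fmeasurable: "0 \<le> t \<Longrightarrow> {x. t < \<bar>u x\<bar>} \<in> fmeasurable lebesgue"
  by (rule fmeasurableI2[OF \<Omega>_fmeasurable abs_superlevel_subset]) auto

lemma emeasure_abs_superlevel: "0 \<le> t \<Longrightarrow> emeasure lebesgue {x. t < \<bar>u x\<bar>} = distrib_fun u t"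
  using abs_superlevel_fmeasurable by (simp add: emeasure_eq_measure2 distrib_fun_def)

lemma distrib_fun_le_measure: "0 \<le> t \<Longrightarrow> distrib_fun u t \<le> measure lebesgue \<Omega>"
  unfolding distrib_fun_def
  by (intro measure_mono_fmeasurable[OF abs_superlevel_subset _ \<Omega>_fmeasurable]) auto

lemma distrib_fun_antimono: "0 \<le> s \<Longrightarrow> s \<le> t \<Longrightarrow> distrib_fun u t \<le> distrib_fun u s"
  unfolding distrib_fun_def
  by (intro measure_mono_fmeasurable abs_superlevel_fmeasurable) auto

lemma emeasure_le_distrib_fun:
  assumes "0 \<le> t" and "AE x in lebesgue. x \<in> B \<longrightarrow> t < \<bar>u x\<bar>"
  shows "emeasure lebesgue B \<le> distrib_fun u t"
proof -
  have "AE x in lebesgue. x \<in> B \<longrightarrow> x \<in> {x. t < \<bar>u x\<bar>}"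
    using assms(2) by simp
  then have "emeasure lebesgue B \<le> emeasure lebesgue {x. t < \<bar>u x\<bar>}"
    by (rule emeasure_mono_AE) measurable
  then show ?thesis
    using emeasure_abs_superlevel[OF \<open>0 \<le> t\<close>] by simp
qed

lemma borel_measurable_LAp_integrand:
  assumes mono: "mono_on {0..measure lebesgue \<Omega>} A"
  shows "(\<lambda>t. indicator {0<..} t * ennreal (A (distrib_fun u t) * t powr (p - 1)))
    \<in> borel_measurable lborel"
proof -
  have "mono_on {0<..} (\<lambda>t. - A (distrib_fun u t))"
    by (intro mono_onI) (auto intro!: mono_onD[OF mono] distrib_fun_antimono distrib_fun_le_measure)
  then have A_\<mu>: "(\<lambda>t. - A (distrib_fun u t)) \<in> borel_measurable (restrict_space borel {0<..})"
    by (rule borel_measurable_mono_on_fnc)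
  have "(\<lambda>t. ennreal (- (- A (distrib_fun u t)) * t powr (p - 1)))
      \<in> borel_measurable (restrict_space borel {0<..})"
    by (intro measurable_compose[OF _ measurable_ennreal] borel_measurable_times
        borel_measurable_uminus A_\<mu> measurable_restrict_space1) measurable
  then have "(\<lambda>t. if t \<in> {0<..} then ennreal (A (distrib_fun u t) * t powr (p - 1)) else 0)
      \<in> borel_measurable borel"
    by (subst measurable_If_restrict_space_iff) (auto simp del: greaterThan_iff)
  moreover have "(\<lambda>t. indicator {0<..} t * ennreal (A (distrib_fun u t) * t powr (p - 1)))
      = (\<lambda>t. if t \<in> {0<..} then ennreal (A (distrib_fun u t) * t powr (p - 1)) else 0)"
    by (auto simp: indicator_def)
  ultimately show ?thesis
    by simp
qed

end

lemma LAp_subset_Lp_space: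
  fixes \<Omega> :: "'a::euclidean_space set"
  assumes \<Omega>: "\<Omega> \<in> fmeasurable lebesgue"
    and mono: "mono_on {0..measure lebesgue \<Omega>} A"
    and c: "0 < c" "\<And>s. s \<in> {0..measure lebesgue \<Omega>} \<Longrightarrow> c * s \<le> A s"
    and p: "0 < p"
  shows "LAp A p \<Omega> \<subseteq> Lp_space p \<Omega>"
proof
  fix u assume "u \<in> LAp A p \<Omega>"
  then have u[measurable]: "u \<in> borel_measurable lebesgue" and vanishes: "\<And>x. x \<notin> \<Omega> \<Longrightarrow> u x = 0"
    and finite: "LAp_norm_pow A p u < \<infinity>"
    by (auto simp: LAp_def)
  define F where "F t = indicator {0<..} t * ennreal (A (distrib_fun u t) * t powr (p - 1))" for t
  have [measurable]: "F \<in> borel_measurable lborel"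
    unfolding F_def by (rule borel_measurable_LAp_integrand[OF u vanishes \<Omega> mono])
  have "(\<integral>\<^sup>+x. ennreal (\<bar>u x\<bar> powr p) \<partial>lebesgue)
      = (\<integral>\<^sup>+t. indicator {0<..} t * ennreal (p * t powr (p - 1))
          * emeasure lebesgue {x. t < \<bar>u x\<bar>} \<partial>lborel)"
    by (rule nn_integral_powr_layer_cake[OF u p])
  also have "\<dots> \<le> (\<integral>\<^sup>+t. ennreal (p / c) * F t \<partial>lborel)"
  proof (intro nn_integral_mono)
    fix t :: real
    show "indicator {0<..} t * ennreal (p * t powr (p - 1)) * emeasure lebesgue {x. t < \<bar>u x\<bar>}
        \<le> ennreal (p / c) * F t"
    proof (cases "0 < t")
      case True
      let ?\<mu> = "distrib_fun u t"
      have \<mu>: "?\<mu> \<in> {0..measure lebesgue \<Omega>}"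
        using True distrib_fun_le_measure[OF u vanishes \<Omega>] by (simp add: distrib_fun_def)
      have "?\<mu> \<le> A ?\<mu> / c"
        using c(2)[OF \<mu>] c(1) by (simp add: field_simps)
      then have "p * t powr (p - 1) * ?\<mu> \<le> p * t powr (p - 1) * (A ?\<mu> / c)"
        using p by (intro mult_left_mono) auto
      moreover have "0 \<le> A ?\<mu>"
        using c(2)[OF \<mu>] c(1) by (meson distrib_fun_nonneg less_imp_le mult_nonneg_nonneg order_trans)
      ultimately show ?thesis
        using True c p emeasure_abs_superlevel[OF u vanishes \<Omega>, of t]
        by (simp add: F_def ennreal_mult[symmetric] ennreal_leI mult_ac)
    qed simp
  qed
  also have "\<dots> = ennreal (p / c) * (\<integral>\<^sup>+t. F t \<partial>lborel)"
    by (rule nn_integral_cmult) measurable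
  also have "\<dots> < \<infinity>"
    using finite p by (simp add: LAp_norm_pow_def F_def ennreal_mult_less_top)
  finally show "u \<in> Lp_space p \<Omega>"
    using vanishes by (simp add: Lp_space_def)
qed

lemma eventually_superlinear_at_right_0:
  fixes A A' :: "real \<Rightarrow> real"
  assumes "0 < M"
    and deriv: "\<And>s. s \<in> {0<..M} \<Longrightarrow> (A has_real_derivative A' s) (at s within {0<..M})"
    and A'_lim: "filterlim A' at_top (at_right 0)"
    and nonneg: "\<And>s. s \<in> {0..M} \<Longrightarrow> 0 \<le> A s"
  shows "eventually (\<lambda>s. K * s \<le> A s) (at_right 0)"
proof -
  obtain b where "0 < b" and b: "\<And>s. 0 < s \<Longrightarrow> s < b \<Longrightarrow> K \<le> A' s"
    using A'_lim unfolding filterlim_at_top eventually_at_right_field by blast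
  define d where "d = min b M"
  have DERIV_A: "DERIV A s :> A' s" if "0 < s" "s < M" for s
  proof -
    have "(A has_real_derivative A' s) (at s within {0<..<M})"
      by (rule DERIV_subset[OF deriv]) (use that in auto)
    then show ?thesis
      using that by (simp add: at_within_open[of s "{0<..<M}"])
  qed
  have "K * s \<le> A s" if s: "0 < s" "s < d" for s
  proof -
    have "- (K * e) \<le> A s - K * s" if e: "0 < e" "e < s" for e
    proof -
      have "A e - K * e \<le> A s - K * s"
      proof (rule DERIV_nonneg_imp_nondecreasing[of e s])
        fix x assume "e \<le> x" "x \<le> s"
        then have x: "0 < x" "x < M" "x < b"
          using e s by (auto simp: d_def)
        have "DERIV (\<lambda>t. A t - K * t) x :> A' x - K * 1"
          by (intro DERIV_diff DERIV_A[OF x(1,2)] DERIV_cmult DERIV_ident)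
        then show "\<exists>y. DERIV (\<lambda>t. A t - K * t) x :> y \<and> 0 \<le> y"
          using b[OF x(1,3)] by auto
      qed (use e in simp)
      moreover have "0 \<le> A e"
        using e s nonneg by (simp add: d_def)
      ultimately show ?thesis
        by linarith
    qed
    then have "eventually (\<lambda>e. - (K * e) \<le> A s - K * s) (at_right 0)"
      unfolding eventually_at_right_field by (intro exI[of _ s]) (use s in auto)
    moreover have "((\<lambda>e. - (K * e)) \<longlongrightarrow> - (K * 0)) (at_right 0)"
      by (intro tendsto_intros)
    ultimately have "- (K * 0) \<le> A s - K * s"
      using trivial_limit_at_right_real[of 0] by (intro tendsto_upperbound)
    then show ?thesis
      by simp
  qed
  then show ?thesis
    unfolding eventually_at_right_field using \<open>0 < b\<close> \<open>0 < M\<close> by (intro exI[of _ d]) (auto simp: d_def)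
qed

lemma linear_lower_bound_on_interval:
  fixes A :: "real \<Rightarrow> real"
  assumes "0 < M" and ev: "eventually (\<lambda>s. s \<le> A s) (at_right 0)"
    and mono: "mono_on {0..M} A" and "0 \<le> A 0"
  shows "\<exists>c>0. \<forall>s\<in>{0..M}. c * s \<le> A s"
proof -
  obtain b where "0 < b" and b: "\<And>s. 0 < s \<Longrightarrow> s < b \<Longrightarrow> s \<le> A s"
    using ev unfolding eventually_at_right_field by blast
  define \<delta> where "\<delta> = min (b / 2) M"
  have \<delta>: "0 < \<delta>" "\<delta> \<le> M" "\<delta> \<le> A \<delta>"
    using \<open>0 < b\<close> \<open>0 < M\<close> b[of \<delta>] by (auto simp: \<delta>_def)
  have "\<delta> / M * s \<le> A s" if s: "s \<in> {0..M}" for s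
  proof (cases "s \<le> \<delta>")
    case True
    have "\<delta> / M * s \<le> s"
      using \<delta> s by (intro mult_left_le_one_le) auto
    moreover have "s \<le> A s" if "s \<noteq> 0"
      using that True s \<open>0 < b\<close> by (intro b) (auto simp: \<delta>_def)
    ultimately show ?thesis
      using \<open>0 \<le> A 0\<close> by (cases "s = 0") auto
  next
    case False
    have "\<delta> / M * s \<le> \<delta> / M * M"
      using s \<delta> \<open>0 < M\<close> by (intro mult_left_mono) auto
    then have "\<delta> / M * s \<le> \<delta>"
      using \<open>0 < M\<close> by simp
    also have "\<dots> \<le> A s"
      using \<delta> mono_onD[OF mono, of \<delta> s] s False by auto
    finally show ?thesis .
  qed
  then show ?thesis
    using \<delta> \<open>0 < M\<close> by (intro exI[of _ "\<delta> / M"]) auto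
qed

lemma ennreal_suminf_const_eq_top:
  fixes c :: ennreal
  assumes "c \<noteq> 0"
  shows "(\<Sum>i::nat. c) = \<infinity>"
proof -
  have "(\<Sum>i::nat. c) = (\<integral>\<^sup>+i. c \<partial>count_space (UNIV :: nat set))"
    by (rule nn_integral_count_space_nat[of "\<lambda>_. c", symmetric])
  also have "\<dots> = c * \<infinity>"
    by simp
  also have "\<dots> = \<infinity>"
    using assms by (simp add: ennreal_mult_top)
  finally show ?thesis .
qed

lemma eventually_at_right_0_decseq:
  fixes P :: "nat \<Rightarrow> real \<Rightarrow> bool"
  assumes "\<And>k. eventually (P k) (at_right 0)"
  obtains r where "decseq r" "\<And>k. 0 < r k" "\<And>k. P k (r k)"
proof -
  obtain b where b: "\<And>k. 0 < b k" "\<And>k y. 0 < y \<Longrightarrow> y < b k \<Longrightarrow> P k y"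
    using assms unfolding eventually_at_right_field by metis
  define r where "r k = Min ((\<lambda>j. b j / 2) ` {..k})" for k
  have "decseq r"
    unfolding decseq_def r_def by (intro allI impI Min_antimono) auto
  moreover have "0 < r k" for k
    using b(1) by (simp add: r_def)
  moreover have "r k < b k" for k
    using b(1)[of k] Min_le[of "(\<lambda>j. b j / 2) ` {..k}" "b k / 2"] by (simp add: r_def)
  ultimately show ?thesis
    using b(2) that by blast
qed

lemma exists_nested_superlinear_balls:
  fixes \<Omega> :: "'a::euclidean_space set" and A :: "real \<Rightarrow> real"
  assumes "open \<Omega>" "\<Omega> \<noteq> {}"
    and superlinear: "\<And>K. eventually (\<lambda>s. K * s \<le> A s) (at_right 0)"
  obtains E :: "nat \<Rightarrow> 'a set"
  where "decseq E" "\<And>k. E k \<subseteq> \<Omega>" "\<And>k. E k \<in> fmeasurable lebesgue"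
    "\<And>k. 0 < measure lebesgue (E k)"
    "\<And>k. 2 ^ k * measure lebesgue (E k) \<le> A (measure lebesgue (E k))"
proof -
  obtain x0 R where "0 < R" "ball x0 R \<subseteq> \<Omega>"
    using assms(1,2) by (meson ex_in_conv openE)
  define vol where "vol r = measure lebesgue (ball x0 r)" for r
  have vol_eq: "vol r = unit_ball_vol DIM('a) * r ^ DIM('a)" if "0 \<le> r" for r
    using that by (simp add: vol_def measure_def emeasure_ball)
  have vol_lim: "filterlim vol (at_right 0) (at_right 0)"
    unfolding filterlim_at
  proof
    have "((\<lambda>r. unit_ball_vol DIM('a) * r ^ DIM('a)) \<longlongrightarrow> unit_ball_vol DIM('a) * 0 ^ DIM('a))
        (at_right 0)"
      by (intro tendsto_intros)
    then have "((\<lambda>r. unit_ball_vol DIM('a) * r ^ DIM('a)) \<longlongrightarrow> 0) (at_right 0)"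
      by (simp add: zero_power[OF DIM_positive])
    moreover have "eventually (\<lambda>r. unit_ball_vol DIM('a) * r ^ DIM('a) = vol r) (at_right 0)"
      unfolding eventually_at_right_field by (intro exI[of _ 1]) (simp add: vol_eq)
    ultimately show "(vol \<longlongrightarrow> 0) (at_right 0)"
      by (rule Lim_transform_eventually)
    show "eventually (\<lambda>r. vol r \<in> {0<..} \<and> vol r \<noteq> 0) (at_right 0)"
      unfolding eventually_at_right_field
      by (intro exI[of _ 1]) (simp add: vol_eq order.strict_implies_not_eq[OF unit_ball_vol_pos, symmetric])
  qed
  have "eventually (\<lambda>r. r < R) (at_right 0)"
    unfolding eventually_at_right_field using \<open>0 < R\<close> by (intro exI[of _ R]) auto
  then have "eventually (\<lambda>r. r < R \<and> 2 ^ k * vol r \<le> A (vol r)) (at_right 0)" for k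
    using eventually_compose_filterlim[OF superlinear vol_lim] by (simp add: eventually_conj_iff)
  then obtain r where "decseq r" "\<And>k. 0 < r k" "\<And>k. r k < R \<and> 2 ^ k * vol (r k) \<le> A (vol (r k))"
    by (rule eventually_at_right_0_decseq[of "\<lambda>k r. r < R \<and> 2 ^ k * vol r \<le> A (vol r)"]) blast+
  show ?thesis
  proof (rule that[of "\<lambda>k. ball x0 (r k)"])
    show "decseq (\<lambda>k. ball x0 (r k))"
      using \<open>decseq r\<close> unfolding decseq_def by (meson less_le_trans subset_ball)
    show "ball x0 (r k) \<subseteq> \<Omega>" for k
      using \<open>r k < R \<and> _\<close> \<open>ball x0 R \<subseteq> \<Omega>\<close> by auto
    show "ball x0 (r k) \<in> fmeasurable lebesgue" for k
      by simp
    show "0 < measure lebesgue (ball x0 (r k))" for k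
      using \<open>0 < r k\<close> vol_eq[of "r k"] by (simp add: vol_def)
    show "2 ^ k * measure lebesgue (ball x0 (r k)) \<le> A (measure lebesgue (ball x0 (r k)))" for k
      using \<open>r k < R \<and> _\<close> by (simp add: vol_def)
  qed
qed

lemma LAp_norm_pow_eq_top:
  fixes T c :: "nat \<Rightarrow> real" and u :: "'a::euclidean_space \<Rightarrow> real"
  assumes T: "incseq T" "0 \<le> T 0" and p: "0 < p"
    and c: "\<And>k. 0 < c k" "\<And>k. T (Suc k) powr p - T k powr p = c k"
    and A_bound: "\<And>k t. T k < t \<Longrightarrow> t < T (Suc k) \<Longrightarrow> 1 / c k \<le> A (distrib_fun u t)"
  shows "LAp_norm_pow A p u = \<infinity>"
proof -
  define I where "I k = {T k<..<T (Suc k)}" for k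
  define F where "F t = indicator {0<..} t * ennreal (A (distrib_fun u t) * t powr (p - 1))" for t
  define g where "g k t = ennreal (1 / (p * c k)) * (indicator (I k) t * ennreal (p * t powr (p - 1)))"
    for k t
  have T_nonneg: "0 \<le> T k" for k
    using T by (meson order_trans le0 incseqD)
  have "I j \<inter> I k = {}" if "j < k" for j k
    using incseqD[OF T(1), of "Suc j" k] that by (auto simp: I_def)
  then have "disjoint_family I"
    unfolding disjoint_family_on_def by (metis Int_commute nat_neq_iff)
  have "(\<integral>\<^sup>+t. g k t \<partial>lborel) = 1 / p" for k
  proof -
    have "(\<integral>\<^sup>+t. g k t \<partial>lborel) = ennreal (1 / (p * c k)) * ennreal (c k)"
      unfolding g_def I_def using T_nonneg c p
      by (subst nn_integral_cmult) (auto simp: nn_integral_powr_derivative incseq_SucD T(1))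
    also have "\<dots> = 1 / p"
      using c(1)[of k] p by (simp add: ennreal_mult[symmetric] divide_ennreal)
    finally show ?thesis .
  qed
  then have "\<infinity> = (\<Sum>k. \<integral>\<^sup>+t. g k t \<partial>lborel)"
    using p by (simp add: ennreal_suminf_const_eq_top)
  also have "\<dots> = (\<integral>\<^sup>+t. (\<Sum>k. g k t) \<partial>lborel)"
    by (rule nn_integral_suminf[symmetric]) (simp add: g_def I_def)
  also have "\<dots> \<le> (\<integral>\<^sup>+t. F t \<partial>lborel)"
  proof (intro nn_integral_mono)
    fix t
    show "(\<Sum>k. g k t) \<le> F t"
    proof (cases "\<exists>k. t \<in> I k")
      case True
      then obtain k where k: "t \<in> I k" ..
      then have t: "0 < t" "T k < t" "t < T (Suc k)"
        using T_nonneg[of k] by (auto simp: I_def)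
      have "(\<Sum>k. g k t) = ennreal (1 / (p * c k)) * ennreal (p * t powr (p - 1))"
        using suminf_cmult_indicator[OF \<open>disjoint_family I\<close> k,
            of "\<lambda>k. ennreal (1 / (p * c k)) * ennreal (p * t powr (p - 1))"]
        by (simp add: g_def mult_ac)
      also have "\<dots> = ennreal (1 / c k * t powr (p - 1))"
        using p c(1)[of k] by (simp add: ennreal_mult[symmetric])
      also have "\<dots> \<le> ennreal (A (distrib_fun u t) * t powr (p - 1))"
        using A_bound[OF t(2,3)] by (intro ennreal_leI mult_right_mono) auto
      also have "\<dots> = F t"
        using t(1) by (simp add: F_def)
      finally show ?thesis .
    qed (simp add: g_def)
  qed
  finally have "(\<integral>\<^sup>+t. F t \<partial>lborel) = \<infinity>"
    by (simp add: top_unique)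
  then show ?thesis
    using p by (simp add: LAp_norm_pow_def F_def ennreal_mult_top)
qed

lemma nn_integral_suminf_cmult_indicator:
  assumes "\<And>k. E k \<in> sets M"
  shows "(\<integral>\<^sup>+x. (\<Sum>k. c k * indicator (E k) x) \<partial>M) = (\<Sum>k. c k * emeasure M (E k))"
  using assms by (simp add: nn_integral_suminf nn_integral_cmult_indicator)

lemma partial_sum_le_enn2real_suminf_indicator:
  assumes "decseq E" "x \<in> E k" "\<And>j. 0 \<le> c j"
    and finite: "(\<Sum>j. ennreal (c j) * indicator (E j) x) \<noteq> \<infinity>"
  shows "(\<Sum>j<Suc k. c j) \<le> enn2real (\<Sum>j. ennreal (c j) * indicator (E j) x)"
proof -
  have "x \<in> E j" if "j \<le> k" for j
    using decseqD[OF assms(1) that] assms(2) by blast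
  have "ennreal (\<Sum>j<Suc k. c j) = (\<Sum>j<Suc k. ennreal (c j))"
    using assms(3) by (intro sum_ennreal[symmetric]) auto
  also have "\<dots> = (\<Sum>j<Suc k. ennreal (c j) * indicator (E j) x)"
    using \<open>\<And>j. j \<le> k \<Longrightarrow> x \<in> E j\<close> by (intro sum.cong) auto
  also have "\<dots> \<le> (\<Sum>j. ennreal (c j) * indicator (E j) x)"
    by (intro sum_le_suminf) auto
  finally have "enn2real (ennreal (\<Sum>j<Suc k. c j)) \<le> enn2real (\<Sum>j. ennreal (c j) * indicator (E j) x)"
    using finite by (intro enn2real_mono) (simp_all add: less_top)
  moreover have "0 \<le> (\<Sum>j<Suc k. c j)"
    using assms(3) by (intro sum_nonneg)
  ultimately show ?thesis
    by (simp only: enn2real_ennreal)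
qed

lemma enn2real_powr_root_in_Lp_space:
  fixes S :: "'a::euclidean_space \<Rightarrow> ennreal"
  assumes [measurable]: "S \<in> borel_measurable lebesgue"
    and "(\<integral>\<^sup>+x. S x \<partial>lebesgue) < \<infinity>" and "\<And>x. x \<notin> \<Omega> \<Longrightarrow> S x = 0" and "0 < p"
  shows "(\<lambda>x. enn2real (S x) powr (1 / p)) \<in> Lp_space p \<Omega>"
proof -
  have "\<bar>enn2real (S x) powr (1 / p)\<bar> powr p = enn2real (S x)" for x
    using \<open>0 < p\<close> by (simp add: powr_powr)
  then have "(\<integral>\<^sup>+x. ennreal (\<bar>enn2real (S x) powr (1 / p)\<bar> powr p) \<partial>lebesgue) \<le> (\<integral>\<^sup>+x. S x \<partial>lebesgue)"
    by (intro nn_integral_mono) (simp add: ennreal_enn2real_if)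
  then show ?thesis
    using assms by (simp add: Lp_space_def)
qed

lemma exists_Lp_function_with_nested_level_sets:
  fixes \<Omega> :: "'a::euclidean_space set" and E :: "nat \<Rightarrow> 'a set" and c :: "nat \<Rightarrow> real"
  assumes \<Omega>: "\<Omega> \<in> fmeasurable lebesgue"
    and E: "decseq E" "\<And>k. E k \<subseteq> \<Omega>" "\<And>k. E k \<in> fmeasurable lebesgue"
    and c: "\<And>k. 0 \<le> c k" "summable (\<lambda>k. c k * measure lebesgue (E k))"
    and p: "0 < p"
  obtains u T where "u \<in> Lp_space p \<Omega>" "incseq T" "T 0 = 0"
    "\<And>k. T (Suc k) powr p - T k powr p = c k"
    "\<And>k t. 0 \<le> t \<Longrightarrow> t < T (Suc k) \<Longrightarrow> measure lebesgue (E k) \<le> distrib_fun u t"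
proof -
  define S where "S x = (\<Sum>k. ennreal (c k) * indicator (E k) x)" for x
  define u where "u x = enn2real (S x) powr (1 / p)" for x
    \<comment> \<open>\<open>enn2real\<close> sends \<open>S x = \<infinity>\<close> to \<open>0\<close>; this happens only on a null set\<close>
  define T where "T k = (\<Sum>j<k. c j) powr (1 / p)" for k
  have [measurable]: "E k \<in> sets lebesgue" for k
    using E(3) by auto
  have [measurable]: "S \<in> borel_measurable lebesgue"
    unfolding S_def by measurable
  then have u_measurable[measurable]: "u \<in> borel_measurable lebesgue"
    unfolding u_def by measurable
  have S_vanishes: "S x = 0" if "x \<notin> \<Omega>" for x
  proof -
    have "x \<notin> E k" for k
      using E(2) that by blast
    then show ?thesis
      by (simp add: S_def)
  qed
  then have u_vanishes: "u x = 0" if "x \<notin> \<Omega>" for x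
    using that by (simp add: u_def)
  have "(\<integral>\<^sup>+x. S x \<partial>lebesgue) = (\<Sum>k. ennreal (c k * measure lebesgue (E k)))"
    unfolding S_def nn_integral_suminf_cmult_indicator[OF \<open>\<And>k. E k \<in> sets lebesgue\<close>]
    using E(3) c(1) by (intro suminf_cong) (simp add: emeasure_eq_measure2 ennreal_mult)
  then have S_integral_finite: "(\<integral>\<^sup>+x. S x \<partial>lebesgue) < \<infinity>"
    using c by (simp add: ennreal_suminf_neq_top less_top[symmetric])
  then have "u \<in> Lp_space p \<Omega>"
    unfolding u_def using S_vanishes p by (intro enn2real_powr_root_in_Lp_space) auto
  moreover have "incseq T"
    unfolding incseq_def T_def using p c by (intro allI impI powr_mono2 sum_mono2 sum_nonneg) auto
  moreover have "T 0 = 0"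
    by (simp add: T_def)
  moreover have "T (Suc k) powr p - T k powr p = c k" for k
    using p c by (simp add: T_def powr_powr sum_nonneg)
  moreover have "measure lebesgue (E k) \<le> distrib_fun u t" if "0 \<le> t" "t < T (Suc k)" for k t
  proof -
    have "AE x in lebesgue. S x \<noteq> \<infinity>"
      using S_integral_finite by (intro nn_integral_PInf_AE) (auto simp: less_top)
    then have "AE x in lebesgue. x \<in> E k \<longrightarrow> t < \<bar>u x\<bar>"
    proof (rule eventually_mono, intro impI)
      fix x assume "S x \<noteq> \<infinity>" "x \<in> E k"
      then have "(\<Sum>j<Suc k. c j) \<le> enn2real (S x)"
        unfolding S_def using E(1) c(1) by (intro partial_sum_le_enn2real_suminf_indicator)
      then have "T (Suc k) \<le> u x"
        unfolding T_def u_def using p c(1) by (intro powr_mono2 sum_nonneg) auto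
      then show "t < \<bar>u x\<bar>"
        using that(2) by simp
    qed
    then have "emeasure lebesgue (E k) \<le> distrib_fun u t"
      using emeasure_le_distrib_fun[OF u_measurable u_vanishes \<Omega> that(1)] by blast
    then show ?thesis
      using E(3) by (simp add: emeasure_eq_measure2)
  qed
  ultimately show ?thesis
    by (rule that)
qed

lemma Lp_space_not_subset_LAp:
  fixes \<Omega> :: "'a::euclidean_space set" and E :: "nat \<Rightarrow> 'a set"
  assumes \<Omega>: "\<Omega> \<in> fmeasurable lebesgue" and mono: "mono_on {0..measure lebesgue \<Omega>} A"
    and E: "decseq E" "\<And>k. E k \<subseteq> \<Omega>" "\<And>k. E k \<in> fmeasurable lebesgue"
      "\<And>k. 0 < measure lebesgue (E k)"
      "\<And>k. 2 ^ k * measure lebesgue (E k) \<le> A (measure lebesgue (E k))"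
    and p: "0 < p"
  shows "\<not> Lp_space p \<Omega> \<subseteq> LAp A p \<Omega>"
proof -
  define c where "c k = 1 / (2 ^ k * measure lebesgue (E k))" for k
  have c_pos: "0 < c k" for k
    using E(4)[of k] by (simp add: c_def)
  have geometric: "(\<lambda>k. c k * measure lebesgue (E k)) = (\<lambda>k. (1 / 2) ^ k)"
    using less_imp_neq[OF E(4), symmetric] by (simp add: c_def power_one_over)
  have "summable (\<lambda>k. c k * measure lebesgue (E k))"
    unfolding geometric by (rule summable_geometric) simp
  then obtain u T where u: "u \<in> Lp_space p \<Omega>" and T: "incseq T" "T 0 = 0"
    "\<And>k. T (Suc k) powr p - T k powr p = c k"
    "\<And>k t. 0 \<le> t \<Longrightarrow> t < T (Suc k) \<Longrightarrow> measure lebesgue (E k) \<le> distrib_fun u t"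
    by (rule exists_Lp_function_with_nested_level_sets[OF \<Omega> E(1-3) less_imp_le[OF c_pos] _ p]) blast
  have u_measurable: "u \<in> borel_measurable lebesgue" and u_vanishes: "\<And>x. x \<notin> \<Omega> \<Longrightarrow> u x = 0"
    using u by (auto simp: Lp_space_def)
  have "LAp_norm_pow A p u = \<infinity>"
  proof (rule LAp_norm_pow_eq_top[OF T(1) _ p c_pos T(3)])
    show "1 / c k \<le> A (distrib_fun u t)" if "T k < t" "t < T (Suc k)" for k t
    proof -
      have "0 \<le> t"
        using that(1) incseqD[OF T(1), of 0 k] T(2) by simp
      then have "measure lebesgue (E k) \<le> distrib_fun u t" "distrib_fun u t \<le> measure lebesgue \<Omega>"
        using T(4)[of t k] that(2) distrib_fun_le_measure[OF u_measurable u_vanishes \<Omega>] by auto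
      then have "A (measure lebesgue (E k)) \<le> A (distrib_fun u t)"
        using E(4)[of k] by (intro mono_onD[OF mono]) auto
      then show ?thesis
        using E(5)[of k] by (simp add: c_def)
    qed
  qed (simp add: T(2))
  then show ?thesis
    using u by (auto simp: LAp_def)
qed

lemma measure_lebesgue_open_pos:
  fixes \<Omega> :: "'a::euclidean_space set"
  assumes "open \<Omega>" "\<Omega> \<noteq> {}" "\<Omega> \<in> fmeasurable lebesgue"
  shows "0 < measure lebesgue \<Omega>"
proof -
  obtain x0 R where "0 < R" "ball x0 R \<subseteq> \<Omega>"
    using assms(1,2) by (meson ex_in_conv openE)
  then have "0 < measure lebesgue (ball x0 R)"
    by simp
  also have "\<dots> \<le> measure lebesgue \<Omega>"
    using \<open>ball x0 R \<subseteq> \<Omega>\<close> by (intro measure_mono_fmeasurable[OF _ _ assms(3)]) auto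
  finally show ?thesis .
qed

theorem mainTheorem8:
  fixes \<Omega> :: "'a::euclidean_space set"
    and A A1 A2 A3 :: "real \<Rightarrow> real"
    and \<nu> :: real
  assumes "open \<Omega>" and "bounded \<Omega>" and "\<Omega> \<noteq> {}"
    and "mono_on {0..measure lebesgue \<Omega>} A"
    and "\<forall>s\<in>{0..measure lebesgue \<Omega>}. A s \<ge> 0"
    and "A 0 = 0"
    and "\<forall>s\<in>{0<..measure lebesgue \<Omega>}.
           (A has_real_derivative A1 s) (at s within {0<..measure lebesgue \<Omega>})
         \<and> (A1 has_real_derivative A2 s) (at s within {0<..measure lebesgue \<Omega>})
         \<and> (A2 has_real_derivative A3 s) (at s within {0<..measure lebesgue \<Omega>})"
    and "continuous_on {0<..measure lebesgue \<Omega>} A3"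
    and "filterlim A1 at_top (at_right 0)"
    and "\<nu> > 1"
    and "\<exists>L::ereal. ((\<lambda>s. ereal (A1 s * A3 s / (A2 s)\<^sup>2)) \<longlongrightarrow> L) (at_right 0) \<and> L \<ge> ereal \<nu>"
    and "p \<ge> 1"
  shows "LAp A p \<Omega> \<subset> Lp_space p \<Omega>"
proof -
  define M where "M = measure lebesgue \<Omega>"
  have \<Omega>: "\<Omega> \<in> fmeasurable lebesgue"
    using assms(1,2) by (simp add: bounded_set_imp_lmeasurable)
  have "0 < M"
    unfolding M_def using assms(1,3) \<Omega> by (rule measure_lebesgue_open_pos)
  have superlinear: "eventually (\<lambda>s. K * s \<le> A s) (at_right 0)" for K
    by (rule eventually_superlinear_at_right_0[OF \<open>0 < M\<close>]) (use assms(5,7,9) in \<open>auto simp: M_def\<close>)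
  obtain c where "0 < c" "\<forall>s\<in>{0..M}. c * s \<le> A s"
    using linear_lower_bound_on_interval[OF \<open>0 < M\<close> _ assms(4)[folded M_def]] superlinear[of 1] assms(6)
    by auto
  then have "LAp A p \<Omega> \<subseteq> Lp_space p \<Omega>"
    using assms(12) by (intro LAp_subset_Lp_space[OF \<Omega> assms(4), of c]) (auto simp: M_def)
  moreover obtain E where "decseq E" "\<And>k. E k \<subseteq> \<Omega>" "\<And>k. E k \<in> fmeasurable lebesgue"
    "\<And>k. 0 < measure lebesgue (E k)" "\<And>k. 2 ^ k * measure lebesgue (E k) \<le> A (measure lebesgue (E k))"
    using exists_nested_superlinear_balls[OF assms(1,3) superlinear] by blast
  then have "\<not> Lp_space p \<Omega> \<subseteq> LAp A p \<Omega>"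
    using assms(12) by (intro Lp_space_not_subset_LAp[OF \<Omega> assms(4)]) auto
  ultimately show ?thesis
    by blast
qed

end
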